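(* Let $(G,M,\Delta)$ be a Garside structure, $\mathcal S=\mathrm{Div}(\Delta)\setminus\{1\}$ and $\lg$ the word length on $G$ with respect to $\mathcal S$. Let $\alpha\in G$ and let $\alpha=\Delta^p a$ be its left $\Delta$-form. Then: (1) if $p\ge0$, $\lg(\alpha)=\lg(a)+p$; (2) if $p\le-\lg(a)$, $\lg(\alpha)=-p$; (3) if $-\lg(a)\le p\le0$, $\lg(\alpha)=\lg(a)$. In summary, $\lg(\alpha)=\max(\lg(a)+p,\,-p,\,\lg(a))$.
   Context: Let $G$ be a group and $M$ a submonoid with $M\cap M^{-1}=\{1\}$. Define $\alpha\le_L\beta$ iff $\alpha^{-1}\beta\in M$, and $\alpha\le_R\beta$ iff $\beta\alpha^{-1}\in M$. For $a\in M$ let $\mathrm{Div}_L(a)=\{b\in M: b\le_L a\}$, $\mathrm{Div}_R(a)=\{b\in M: b\le_R a\}$; $a$ is balanced if these coincide, and then $\mathrm{Div}(a)$ denotes this set. $M$ is Noetherian if each $a\in M$ admits an $n$ such that $a$ is not a product of more than $n$ non-trivial factors. A Garside structure $(G,M,\Delta)$: $\Delta\in M$ balanced, $M$ Noetherian, $\mathrm{Div}(\Delta)$ finite and generating $M$ as a monoid and $G$ as a group, $(G,\le_L)$ a lattice. An element $a\in M$ is unmovable if $\Delta\not\le_L a$. Every $\alpha\in G$ can be written uniquely as $\alpha=\Delta^p a$ with $p\in\mathbb Z$ and $a\in M$ unmovable; this is its left $\Delta$-form. *)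

theory Defs
  imports "HOL-Algebra.Algebra"
begin

definition lprod :: "('a, 'b) monoid_scheme \<Rightarrow> 'a list \<Rightarrow> 'a" where
  "lprod G xs = foldr (\<lambda>x y. x \<otimes>\<^bsub>G\<^esub> y) xs \<one>\<^bsub>G\<^esub>"

definition leL :: "('a, 'b) monoid_scheme \<Rightarrow> 'a set \<Rightarrow> 'a \<Rightarrow> 'a \<Rightarrow> bool" where
  "leL G M x y \<longleftrightarrow> inv\<^bsub>G\<^esub> x \<otimes>\<^bsub>G\<^esub> y \<in> M"

definition leR :: "('a, 'b) monoid_scheme \<Rightarrow> 'a set \<Rightarrow> 'a \<Rightarrow> 'a \<Rightarrow> bool" where
  "leR G M x y \<longleftrightarrow> y \<otimes>\<^bsub>G\<^esub> inv\<^bsub>G\<^esub> x \<in> M"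

definition DivL :: "('a, 'b) monoid_scheme \<Rightarrow> 'a set \<Rightarrow> 'a \<Rightarrow> 'a set" where
  "DivL G M a = {b \<in> M. leL G M b a}"

definition DivR :: "('a, 'b) monoid_scheme \<Rightarrow> 'a set \<Rightarrow> 'a \<Rightarrow> 'a set" where
  "DivR G M a = {b \<in> M. leR G M b a}"

definition balanced :: "('a, 'b) monoid_scheme \<Rightarrow> 'a set \<Rightarrow> 'a \<Rightarrow> bool" where
  "balanced G M a \<longleftrightarrow> a \<in> M \<and> DivL G M a = DivR G M a"

text \<open>Div(a) for balanced a (defined as the left divisors).\<close>
definition Div :: "('a, 'b) monoid_scheme \<Rightarrow> 'a set \<Rightarrow> 'a \<Rightarrow> 'a set" where
  "Div G M a = DivL G M a"

definition submonoid_pointed :: "('a, 'b) monoid_scheme \<Rightarrow> 'a set \<Rightarrow> bool" where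
  "submonoid_pointed G M \<longleftrightarrow> M \<subseteq> carrier G \<and> \<one>\<^bsub>G\<^esub> \<in> M
     \<and> (\<forall>x\<in>M. \<forall>y\<in>M. x \<otimes>\<^bsub>G\<^esub> y \<in> M)
     \<and> M \<inter> (\<lambda>x. inv\<^bsub>G\<^esub> x) ` M = {\<one>\<^bsub>G\<^esub>}"

definition noetherian :: "('a, 'b) monoid_scheme \<Rightarrow> 'a set \<Rightarrow> bool" where
  "noetherian G M \<longleftrightarrow> (\<forall>a\<in>M. \<exists>n::nat. \<forall>xs.
      set xs \<subseteq> M - {\<one>\<^bsub>G\<^esub>} \<and> lprod G xs = a \<longrightarrow> length xs \<le> n)"

definition leL_lattice :: "('a, 'b) monoid_scheme \<Rightarrow> 'a set \<Rightarrow> bool" where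
  "leL_lattice G M \<longleftrightarrow>
     (\<forall>x\<in>carrier G. \<forall>y\<in>carrier G. \<exists>z\<in>carrier G.
        leL G M z x \<and> leL G M z y \<and> (\<forall>w\<in>carrier G. leL G M w x \<and> leL G M w y \<longrightarrow> leL G M w z)) \<and>
     (\<forall>x\<in>carrier G. \<forall>y\<in>carrier G. \<exists>z\<in>carrier G.
        leL G M x z \<and> leL G M y z \<and> (\<forall>w\<in>carrier G. leL G M x w \<and> leL G M y w \<longrightarrow> leL G M z w))"

definition garside :: "('a, 'b) monoid_scheme \<Rightarrow> 'a set \<Rightarrow> 'a \<Rightarrow> bool" where
  "garside G M \<Delta> \<longleftrightarrow> group G \<and> submonoid_pointed G M \<and> \<Delta> \<in> M \<and> balanced G M \<Delta>
     \<and> noetherian G M \<and> finite (Div G M \<Delta>)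
     \<and> M = {lprod G xs | xs. set xs \<subseteq> Div G M \<Delta>}
     \<and> generate G (Div G M \<Delta>) = carrier G
     \<and> leL_lattice G M"

definition unmovable :: "('a, 'b) monoid_scheme \<Rightarrow> 'a set \<Rightarrow> 'a \<Rightarrow> 'a \<Rightarrow> bool" where
  "unmovable G M \<Delta> a \<longleftrightarrow> a \<in> M \<and> \<not> leL G M \<Delta> a"

definition word_length :: "('a, 'b) monoid_scheme \<Rightarrow> 'a set \<Rightarrow> 'a \<Rightarrow> nat" where
  "word_length G S x = (LEAST n. \<exists>xs. length xs = n
       \<and> set xs \<subseteq> S \<union> (\<lambda>s. inv\<^bsub>G\<^esub> s) ` S \<and> lprod G xs = x)"

end

theory Submission
  imports Defs
begin

text \<open>
  A word of length \<open>n\<close> in the simples and their inverses represents an element lying in an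
  interval \<open>\<Delta>\<^sup>-\<^sup>N \<le>\<^sub>L x \<le>\<^sub>L \<Delta>\<^sup>P\<close> with \<open>P + N = n\<close>:
  a simple letter raises the upper end by one, an inverse letter lowers the lower end by one,
  because conjugation by \<open>\<Delta>\<close> permutes the simples. Conversely, an element \<open>a \<in> M\<close> with
  \<open>a \<le>\<^sub>L \<Delta>\<^sup>k\<close> is a product of \<open>k\<close> simples (split off its meet with
  \<open>\<Delta>\<^sup>k\<^sup>-\<^sup>1\<close>), and \<open>\<Delta>\<^sup>-\<^sup>n s\<^sub>1 \<cdots> s\<^sub>n\<close> is a product
  of \<open>n\<close> inverse simples; this gives words of length \<open>max (lg a + p) 0 + max (-p) 0\<close> for
  \<open>\<alpha> = \<Delta>\<^sup>p a\<close>. For the lower bound, a shortest word for \<open>\<alpha>\<close> gives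
  \<open>a \<le>\<^sub>L \<Delta>\<^sup>P\<^sup>-\<^sup>p\<close>, hence \<open>P \<ge> lg a + p\<close>, and
  \<open>\<Delta>\<^sup>-\<^sup>N\<^sup>-\<^sup>p \<le>\<^sub>L a\<close>, hence \<open>N \<ge> -p\<close> since otherwise
  \<open>\<Delta> \<le>\<^sub>L a\<close>, contradicting that \<open>a\<close> is unmovable.
\<close>

section \<open>Words in a group\<close>

lemma lprod_Nil [simp]: "lprod G [] = \<one>\<^bsub>G\<^esub>"
  by (simp add: lprod_def)

lemma lprod_Cons [simp]: "lprod G (x # xs) = x \<otimes>\<^bsub>G\<^esub> lprod G xs"
  by (simp add: lprod_def)

context group
begin

lemma inv_mult_cancel_left [simp]: "x \<in> carrier G \<Longrightarrow> y \<in> carrier G \<Longrightarrow> inv x \<otimes> (x \<otimes> y) = y"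
  by (simp add: m_assoc[symmetric])

lemma mult_inv_cancel_left [simp]: "x \<in> carrier G \<Longrightarrow> y \<in> carrier G \<Longrightarrow> x \<otimes> (inv x \<otimes> y) = y"
  by (simp add: m_assoc[symmetric])

lemma lprod_closed: "set xs \<subseteq> carrier G \<Longrightarrow> lprod G xs \<in> carrier G"
  by (induction xs) auto

lemma lprod_append:
  "set xs \<subseteq> carrier G \<Longrightarrow> set ys \<subseteq> carrier G \<Longrightarrow> lprod G (xs @ ys) = lprod G xs \<otimes> lprod G ys"
  by (induction xs) (auto simp: m_assoc lprod_closed)

lemma lprod_replicate: "x \<in> carrier G \<Longrightarrow> lprod G (replicate n x) = x [^] n"
  by (induction n) (simp_all, metis nat_pow_Suc nat_pow_Suc2)

lemma lprod_filter_one: "set xs \<subseteq> carrier G \<Longrightarrow> lprod G (filter (\<lambda>x. x \<noteq> \<one>) xs) = lprod G xs"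
  by (induction xs) (auto simp: lprod_closed)

lemma leL_mult_left_iff:
  assumes "g \<in> carrier G" "x \<in> carrier G" "y \<in> carrier G"
  shows "leL G M (g \<otimes> x) (g \<otimes> y) \<longleftrightarrow> leL G M x y"
  using assms by (simp add: leL_def inv_mult_group m_assoc)

lemma conj_nat_pow_closed:
  assumes "Y \<subseteq> carrier G" "d \<in> carrier G"
    and conj: "\<And>y. y \<in> Y \<Longrightarrow> d \<otimes> y \<otimes> inv d \<in> Y" and "y \<in> Y"
  shows "d [^] (n::nat) \<otimes> y \<otimes> inv (d [^] n) \<in> Y"
proof (induction n)
  case 0
  then show ?case using assms by auto
next
  case (Suc n)
  have "d [^] Suc n \<otimes> y \<otimes> inv (d [^] Suc n) = d \<otimes> (d [^] n \<otimes> y \<otimes> inv (d [^] n)) \<otimes> inv d"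
    unfolding nat_pow_Suc2[OF assms(2)] using assms by (auto simp: inv_mult_group m_assoc)
  then show ?case using conj[OF Suc] by simp
qed

lemma lprod_conj:
  assumes "g \<in> carrier G" "set xs \<subseteq> carrier G"
  shows "g \<otimes> lprod G xs \<otimes> inv g = lprod G (map (\<lambda>x. g \<otimes> x \<otimes> inv g) xs)"
  using assms(2)
proof (induction xs)
  case Nil
  then show ?case using assms(1) by simp
next
  case (Cons x xs)
  then have "lprod G (map (\<lambda>x. g \<otimes> x \<otimes> inv g) (x # xs)) = g \<otimes> x \<otimes> inv g \<otimes> (g \<otimes> lprod G xs \<otimes> inv g)"
    by simp
  then show ?case using Cons.prems assms(1) by (simp add: m_assoc lprod_closed)
qed

lemma word_length_le:
  "set xs \<subseteq> S \<union> (\<lambda>s. inv s) ` S \<Longrightarrow> word_length G S (lprod G xs) \<le> length xs"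
  unfolding word_length_def by (rule Least_le) blast

lemma word_length_witness:
  assumes "S \<subseteq> carrier G" "x \<in> generate G S"
  obtains xs where "set xs \<subseteq> S \<union> (\<lambda>s. inv s) ` S" "length xs = word_length G S x"
    "lprod G xs = x"
proof -
  have "\<exists>xs. set xs \<subseteq> S \<union> (\<lambda>s. inv s) ` S \<and> lprod G xs = x"
    using assms(2)
  proof (induction rule: generate.induct)
    case one
    show ?case by (intro exI[of _ "[]"]) simp
  next
    case (incl h)
    then show ?case using assms(1) by (intro exI[of _ "[h]"]) auto
  next
    case (inv h)
    then show ?case using assms(1) by (intro exI[of _ "[inv h]"]) auto
  next
    case (eng h1 h2)
    then obtain xs ys where "set xs \<subseteq> S \<union> (\<lambda>s. inv s) ` S" "lprod G xs = h1"
      "set ys \<subseteq> S \<union> (\<lambda>s. inv s) ` S" "lprod G ys = h2"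
      by blast
    moreover have "set xs \<subseteq> carrier G" "set ys \<subseteq> carrier G"
      using calculation assms(1) by auto
    ultimately show ?case by (intro exI[of _ "xs @ ys"]) (auto simp: lprod_append)
  qed
  then have "\<exists>n xs. length xs = n \<and> set xs \<subseteq> S \<union> (\<lambda>s. inv s) ` S \<and> lprod G xs = x"
    by blast
  then have "\<exists>xs. length xs = word_length G S x \<and> set xs \<subseteq> S \<union> (\<lambda>s. inv s) ` S \<and> lprod G xs = x"
    unfolding word_length_def by (rule LeastI_ex)
  then show thesis using that by blast
qed

lemma word_length_mult_le:
  assumes "S \<subseteq> carrier G" "x \<in> generate G S" "y \<in> generate G S"
  shows "word_length G S (x \<otimes> y) \<le> word_length G S x + word_length G S y"
proof -
  obtain xs ys
    where xs: "set xs \<subseteq> S \<union> (\<lambda>s. inv s) ` S" "length xs = word_length G S x" "lprod G xs = x"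
    and ys: "set ys \<subseteq> S \<union> (\<lambda>s. inv s) ` S" "length ys = word_length G S y" "lprod G ys = y"
    using word_length_witness assms by metis
  have "x \<otimes> y = lprod G (xs @ ys)"
    using xs ys assms(1) by (subst lprod_append) auto
  then show ?thesis
    using word_length_le[of "xs @ ys" S] xs ys by simp
qed

lemma word_length_remove_one:
  assumes "S \<subseteq> carrier G"
  shows "word_length G (S - {\<one>}) x = word_length G S x"
proof -
  let ?P = "\<lambda>T n. \<exists>xs. length xs = n \<and> set xs \<subseteq> T \<union> (\<lambda>s. inv s) ` T \<and> lprod G xs = x"
  have widen: "?P S n" if "?P (S - {\<one>}) n" for n
    using that by blast
  have shorten: "\<exists>m \<le> n. ?P (S - {\<one>}) m" if word: "?P S n" for n
  proof -
    obtain xs where xs: "length xs = n" "set xs \<subseteq> S \<union> (\<lambda>s. inv s) ` S" "lprod G xs = x"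
      using word by blast
    let ?ys = "filter (\<lambda>x. x \<noteq> \<one>) xs"
    have "set ?ys \<subseteq> (S - {\<one>}) \<union> (\<lambda>s. inv s) ` (S - {\<one>})"
      using xs(2) by force
    moreover have "lprod G ?ys = x"
      using xs assms by (subst lprod_filter_one) auto
    ultimately show ?thesis using xs(1) length_filter_le by blast
  qed
  show ?thesis
  proof (cases "\<exists>n. ?P S n")
    case True
    then have "?P S (LEAST n. ?P S n)" by (rule LeastI_ex)
    then obtain m where m: "m \<le> (LEAST n. ?P S n)" "?P (S - {\<one>}) m"
      using shorten by blast
    have "(LEAST n. ?P (S - {\<one>}) n) \<le> m" using m(2) by (rule Least_le)
    moreover have "(LEAST n. ?P S n) \<le> (LEAST n. ?P (S - {\<one>}) n)"
      using m(2) by (intro Least_le widen LeastI)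
    ultimately show ?thesis unfolding word_length_def using m(1) by linarith
  next
    case False
    then have "?P (S - {\<one>}) = ?P S" using widen by blast
    then show ?thesis unfolding word_length_def by simp
  qed
qed

end

section \<open>Garside structures\<close>

locale garside_structure = group G for G (structure) +
  fixes M :: "'a set" and \<Delta> :: 'a
  assumes garside: "garside G M \<Delta>"
begin

abbreviation simples :: "'a set" where "simples \<equiv> Div G M \<Delta>"

abbreviation word_len :: "'a \<Rightarrow> nat" where "word_len \<equiv> word_length G simples"

abbreviation left_le :: "'a \<Rightarrow> 'a \<Rightarrow> bool" (infix "\<preceq>" 50) where "x \<preceq> y \<equiv> leL G M x y"

lemma M_subset_carrier: "M \<subseteq> carrier G"
  and one_in_M: "\<one> \<in> M"
  and M_mult_closed: "x \<in> M \<Longrightarrow> y \<in> M \<Longrightarrow> x \<otimes> y \<in> M"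
  and Delta_in_M: "\<Delta> \<in> M"
  using garside unfolding garside_def submonoid_pointed_def by auto

lemma Delta_closed [simp]: "\<Delta> \<in> carrier G"
  using Delta_in_M M_subset_carrier by blast

lemma M_inv_in_M_imp_one:
  assumes "x \<in> M" "inv x \<in> M"
  shows "x = \<one>"
proof -
  have "M \<inter> (\<lambda>x. inv x) ` M = {\<one>}"
    using garside unfolding garside_def submonoid_pointed_def by blast
  moreover have "x = inv (inv x)"
    using assms M_subset_carrier by auto
  ultimately show ?thesis using assms by blast
qed

lemma simples_iff: "s \<in> simples \<longleftrightarrow> s \<in> M \<and> inv s \<otimes> \<Delta> \<in> M"
  by (simp add: Div_def DivL_def leL_def)

lemma simples_iff_right: "s \<in> simples \<longleftrightarrow> s \<in> M \<and> \<Delta> \<otimes> inv s \<in> M"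
proof -
  have "simples = DivR G M \<Delta>"
    using garside unfolding garside_def balanced_def Div_def by blast
  then show ?thesis by (simp add: DivR_def leR_def)
qed

lemma simples_subset_carrier: "simples \<subseteq> carrier G"
  using simples_iff M_subset_carrier by auto

lemma one_simple: "\<one> \<in> simples"
  and Delta_simple: "\<Delta> \<in> simples"
  using one_in_M Delta_in_M by (auto simp: simples_iff)

lemma simple_complements:
  assumes "s \<in> simples"
  shows "inv s \<otimes> \<Delta> \<in> simples" "\<Delta> \<otimes> inv s \<in> simples"
proof -
  have s: "s \<in> carrier G" "s \<in> M" "inv s \<otimes> \<Delta> \<in> M" "\<Delta> \<otimes> inv s \<in> M"
    using assms simples_subset_carrier simples_iff simples_iff_right by auto
  have "\<Delta> \<otimes> inv (inv s \<otimes> \<Delta>) = s"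
    using s by (simp add: inv_mult_group)
  then show "inv s \<otimes> \<Delta> \<in> simples"
    using s unfolding simples_iff_right by simp
  have "inv (\<Delta> \<otimes> inv s) \<otimes> \<Delta> = s"
    using s by (simp add: inv_mult_group m_assoc)
  then show "\<Delta> \<otimes> inv s \<in> simples"
    using s unfolding simples_iff by simp
qed

lemma simple_Delta_conj:
  assumes "s \<in> simples"
  shows "\<Delta> \<otimes> s \<otimes> inv \<Delta> \<in> simples" "inv \<Delta> \<otimes> s \<otimes> \<Delta> \<in> simples"
proof -
  have s: "s \<in> carrier G" using assms simples_subset_carrier by blast
  have "\<Delta> \<otimes> inv (\<Delta> \<otimes> inv s) = \<Delta> \<otimes> s \<otimes> inv \<Delta>"
    using s by (simp add: inv_mult_group m_assoc)
  then show "\<Delta> \<otimes> s \<otimes> inv \<Delta> \<in> simples"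
    using simple_complements(2)[OF simple_complements(2)[OF assms]] by simp
  have "inv (inv s \<otimes> \<Delta>) \<otimes> \<Delta> = inv \<Delta> \<otimes> s \<otimes> \<Delta>"
    using s by (simp add: inv_mult_group)
  then show "inv \<Delta> \<otimes> s \<otimes> \<Delta> \<in> simples"
    using simple_complements(1)[OF simple_complements(1)[OF assms]] by simp
qed

lemma M_eq_simple_words: "M = {lprod G xs | xs. set xs \<subseteq> simples}"
  using garside unfolding garside_def by blast

lemma simple_word_in_M: "set xs \<subseteq> simples \<Longrightarrow> lprod G xs \<in> M"
  by (subst M_eq_simple_words) blast

lemma M_elem_simple_word:
  assumes "m \<in> M"
  obtains xs where "set xs \<subseteq> simples" "lprod G xs = m"
  using assms by (subst (asm) M_eq_simple_words) blast

lemma M_conj_closed: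
  assumes "g \<in> carrier G" and simples_conj: "\<And>s. s \<in> simples \<Longrightarrow> g \<otimes> s \<otimes> inv g \<in> simples"
    and "m \<in> M"
  shows "g \<otimes> m \<otimes> inv g \<in> M"
proof -
  obtain xs where xs: "set xs \<subseteq> simples" "lprod G xs = m"
    using assms(3) M_elem_simple_word by blast
  then have "g \<otimes> m \<otimes> inv g = lprod G (map (\<lambda>x. g \<otimes> x \<otimes> inv g) xs)"
    using assms(1) simples_subset_carrier by (auto simp: lprod_conj)
  moreover have "set (map (\<lambda>x. g \<otimes> x \<otimes> inv g) xs) \<subseteq> simples"
    using xs(1) simples_conj by auto
  ultimately show ?thesis using simple_word_in_M by presburger
qed

lemma Delta_pow_conj:
  assumes "m \<in> M"
  shows "\<Delta> [^] (n::nat) \<otimes> m \<otimes> inv (\<Delta> [^] n) \<in> M" "inv (\<Delta> [^] (n::nat)) \<otimes> m \<otimes> \<Delta> [^] n \<in> M"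
proof -
  show "\<Delta> [^] n \<otimes> m \<otimes> inv (\<Delta> [^] n) \<in> M"
    using M_subset_carrier M_conj_closed simple_Delta_conj(1) assms
    by (intro conj_nat_pow_closed) auto
  have "inv \<Delta> [^] n \<otimes> m \<otimes> inv (inv \<Delta> [^] n) \<in> M"
    using M_subset_carrier M_conj_closed[of "inv \<Delta>"] simple_Delta_conj(2) assms
    by (intro conj_nat_pow_closed) auto
  then show "inv (\<Delta> [^] n) \<otimes> m \<otimes> \<Delta> [^] n \<in> M"
    by (simp add: nat_pow_inv)
qed

lemma simple_Delta_pow_conj:
  assumes "s \<in> simples"
  shows "inv (\<Delta> [^] (n::nat)) \<otimes> s \<otimes> \<Delta> [^] n \<in> simples"
proof -
  have "inv \<Delta> [^] n \<otimes> s \<otimes> inv (inv \<Delta> [^] n) \<in> simples"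
    using simples_subset_carrier simple_Delta_conj(2) assms
    by (intro conj_nat_pow_closed) auto
  then show ?thesis by (simp add: nat_pow_inv)
qed

lemma Delta_pow_in_M: "\<Delta> [^] (n::nat) \<in> M"
  by (induction n) (auto simp: one_in_M Delta_in_M M_mult_closed)

lemma Delta_int_pow_in_M_iff:
  assumes "\<Delta> \<noteq> \<one>"
  shows "\<Delta> [^] (k::int) \<in> M \<longleftrightarrow> 0 \<le> k"
proof
  assume "0 \<le> k"
  then show "\<Delta> [^] k \<in> M" using Delta_pow_in_M[of "nat k"] by (simp add: pow_nat)
next
  assume k: "\<Delta> [^] k \<in> M"
  show "0 \<le> k"
  proof (cases k rule: int_cases)
    case (neg n)
    then have "inv (\<Delta> [^] Suc n) \<in> M"
      using k by (simp only: int_pow_neg_int[OF Delta_closed])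
    then have "\<Delta> [^] Suc n = \<one>" by (rule M_inv_in_M_imp_one[OF Delta_pow_in_M])
    then have "\<Delta> [^] n \<otimes> \<Delta> = \<one>" by simp
    then have "inv \<Delta> = \<Delta> [^] n" by (rule inv_equality) simp_all
    then have "inv \<Delta> \<in> M" using Delta_pow_in_M by simp
    then show ?thesis using M_inv_in_M_imp_one Delta_in_M assms by blast
  qed simp
qed

lemma left_le_trans:
  assumes "x \<preceq> y" "y \<preceq> z" "x \<in> carrier G" "y \<in> carrier G" "z \<in> carrier G"
  shows "x \<preceq> z"
proof -
  have "inv x \<otimes> z = (inv x \<otimes> y) \<otimes> (inv y \<otimes> z)"
    using assms(3-5) by (simp add: m_assoc)
  then show ?thesis using assms(1,2) M_mult_closed by (simp add: leL_def)
qed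

lemma left_meet:
  assumes "x \<in> carrier G" "y \<in> carrier G"
  obtains z where "z \<in> carrier G" "z \<preceq> x" "z \<preceq> y"
    "\<And>w. w \<in> carrier G \<Longrightarrow> w \<preceq> x \<Longrightarrow> w \<preceq> y \<Longrightarrow> w \<preceq> z"
proof -
  have "leL_lattice G M" using garside unfolding garside_def by blast
  then have "\<exists>z\<in>carrier G. z \<preceq> x \<and> z \<preceq> y \<and> (\<forall>w\<in>carrier G. w \<preceq> x \<and> w \<preceq> y \<longrightarrow> w \<preceq> z)"
    using assms unfolding leL_lattice_def by blast
  then show thesis using that by blast
qed

section \<open>Words over the simples\<close>

lemma word_between_Delta_powers:
  assumes "set xs \<subseteq> simples \<union> (\<lambda>s. inv s) ` simples"
  shows "\<exists>P N. P + N = length xs \<and> lprod G xs \<preceq> \<Delta> [^] (P::nat) \<and> inv (\<Delta> [^] (N::nat)) \<preceq> lprod G xs"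
  using assms
proof (induction xs)
  case Nil
  then show ?case using one_in_M by (intro exI[of _ 0]) (simp add: leL_def)
next
  case (Cons x xs)
  let ?r = "lprod G xs"
  obtain P N where PN: "P + N = length xs" "?r \<preceq> \<Delta> [^] P" "inv (\<Delta> [^] N) \<preceq> ?r"
    using Cons by auto
  have r: "?r \<in> carrier G"
    using Cons.prems simples_subset_carrier by (intro lprod_closed) auto
  have below: "inv ?r \<otimes> \<Delta> [^] P \<in> M" and above: "\<Delta> [^] N \<otimes> ?r \<in> M"
    using PN r by (simp_all add: leL_def)
  consider (simple) "x \<in> simples" | (inverse) s where "s \<in> simples" "x = inv s"
    using Cons.prems by auto
  then show ?case
  proof cases
    case simple
    have x: "x \<in> carrier G" "x \<in> M" "inv x \<otimes> \<Delta> \<in> M"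
      using simple simples_subset_carrier simples_iff by auto
    have "\<Delta> \<otimes> \<Delta> [^] P = \<Delta> [^] P \<otimes> \<Delta>"
      by (metis Delta_closed nat_pow_Suc nat_pow_Suc2)
    then have "inv (x \<otimes> ?r) \<otimes> \<Delta> [^] Suc P
        = (inv ?r \<otimes> \<Delta> [^] P) \<otimes> (inv (\<Delta> [^] P) \<otimes> (inv x \<otimes> \<Delta>) \<otimes> \<Delta> [^] P)"
      using x r by (simp add: inv_mult_group m_assoc)
    moreover have "\<Delta> [^] N \<otimes> (x \<otimes> ?r) = (\<Delta> [^] N \<otimes> x \<otimes> inv (\<Delta> [^] N)) \<otimes> (\<Delta> [^] N \<otimes> ?r)"
      using x r by (simp add: m_assoc)
    ultimately have "x \<otimes> ?r \<preceq> \<Delta> [^] Suc P" "inv (\<Delta> [^] N) \<preceq> x \<otimes> ?r"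
      using below above x Delta_pow_conj M_mult_closed by (simp_all add: leL_def)
    then show ?thesis using PN by (intro exI[of _ "Suc P"] exI[of _ N]) simp
  next
    case inverse
    have s: "s \<in> carrier G" "s \<in> M" "\<Delta> \<otimes> inv s \<in> M"
      using inverse simples_subset_carrier simples_iff_right by auto
    have "inv (inv s \<otimes> ?r) \<otimes> \<Delta> [^] P = (inv ?r \<otimes> \<Delta> [^] P) \<otimes> (inv (\<Delta> [^] P) \<otimes> s \<otimes> \<Delta> [^] P)"
      using s r by (simp add: inv_mult_group m_assoc)
    moreover have "\<Delta> [^] Suc N \<otimes> (inv s \<otimes> ?r)
        = (\<Delta> [^] N \<otimes> (\<Delta> \<otimes> inv s) \<otimes> inv (\<Delta> [^] N)) \<otimes> (\<Delta> [^] N \<otimes> ?r)"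
      using s r by (simp add: m_assoc)
    ultimately have "inv s \<otimes> ?r \<preceq> \<Delta> [^] P" "inv (\<Delta> [^] Suc N) \<preceq> inv s \<otimes> ?r"
      using below above s Delta_pow_conj M_mult_closed by (simp_all add: leL_def)
    then show ?thesis using PN inverse by (intro exI[of _ P] exI[of _ "Suc N"]) simp
  qed
qed

lemma simple_word_of_le_Delta_pow:
  assumes "a \<in> M" "a \<preceq> \<Delta> [^] (k::nat)"
  shows "\<exists>xs. set xs \<subseteq> simples \<and> length xs = k \<and> lprod G xs = a"
  using assms
proof (induction k arbitrary: a)
  case 0
  then have "inv a \<in> M" using M_subset_carrier by (auto simp: leL_def)
  then have "a = \<one>" using M_inv_in_M_imp_one 0 by blast
  then show ?case by simp
next
  case (Suc k)
  have a: "a \<in> carrier G" using Suc.prems M_subset_carrier by blast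
  obtain b where b: "b \<in> carrier G" "b \<preceq> a" "b \<preceq> \<Delta> [^] k"
    and b_greatest: "\<And>w. w \<in> carrier G \<Longrightarrow> w \<preceq> a \<Longrightarrow> w \<preceq> \<Delta> [^] k \<Longrightarrow> w \<preceq> b"
    using left_meet[OF a nat_pow_closed[OF Delta_closed]] by blast
  have "b \<in> M"
    using b_greatest[of \<one>] a b(1) Suc.prems(1) Delta_pow_in_M by (simp add: leL_def)
  then obtain ys where ys: "set ys \<subseteq> simples" "length ys = k" "lprod G ys = b"
    using Suc.IH b(3) by blast
  \<comment> \<open>\<open>a \<otimes> inv \<Delta>\<close> is a common lower bound of \<open>a\<close> and \<open>\<Delta> [^] k\<close>, so it lies below \<open>b\<close>.\<close>
  define w where "w = a \<otimes> inv \<Delta>"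
  have w: "w \<in> carrier G" using a by (simp add: w_def)
  have w_le_a: "w \<preceq> a" using a Delta_in_M by (simp add: w_def leL_def inv_mult_group m_assoc)
  have "inv w \<otimes> \<Delta> [^] k = \<Delta> \<otimes> (inv a \<otimes> \<Delta> [^] Suc k) \<otimes> inv \<Delta>"
    using a by (simp add: w_def inv_mult_group m_assoc)
  then have w_le_Delta_pow: "w \<preceq> \<Delta> [^] k"
    using Suc.prems(2) Delta_pow_conj(1)[of _ 1] by (simp add: leL_def)
  have "inv w \<otimes> b \<in> M"
    using b_greatest[OF w w_le_a w_le_Delta_pow] by (simp add: leL_def)
  then have "inv \<Delta> \<otimes> (inv w \<otimes> b) \<otimes> \<Delta> \<in> M"
    using Delta_pow_conj(2)[of _ 1] by simp
  moreover have "inv \<Delta> \<otimes> (inv w \<otimes> b) \<otimes> \<Delta> = inv (inv b \<otimes> a) \<otimes> \<Delta>"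
    using a b by (simp add: w_def inv_mult_group m_assoc)
  moreover have "inv b \<otimes> a \<in> M" using b(2) by (simp add: leL_def)
  ultimately have last: "inv b \<otimes> a \<in> simples" by (simp add: simples_iff)
  have "lprod G (ys @ [inv b \<otimes> a]) = a"
    using ys last a b simples_subset_carrier by (subst lprod_append) auto
  then show ?case using ys last by (intro exI[of _ "ys @ [inv b \<otimes> a]"]) auto
qed

lemma inv_Delta_pow_mult_simple_word:
  assumes "set xs \<subseteq> simples"
  shows "\<exists>ys. set ys \<subseteq> simples \<and> length ys = length xs
    \<and> inv (\<Delta> [^] length xs) \<otimes> lprod G xs = lprod G (map (\<lambda>s. inv s) ys)"
  using assms
proof (induction xs)
  case Nil
  then show ?case by simp
next
  case (Cons x xs)
  then obtain ys where ys: "set ys \<subseteq> simples" "length ys = length xs"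
    "inv (\<Delta> [^] length xs) \<otimes> lprod G xs = lprod G (map (\<lambda>s. inv s) ys)"
    by auto
  have r: "lprod G xs \<in> carrier G"
    using Cons.prems simples_subset_carrier by (intro lprod_closed) auto
  have x: "x \<in> simples" "x \<in> carrier G" using Cons.prems simples_subset_carrier by auto
  \<comment> \<open>Move \<open>x\<close> across \<open>\<Delta> [^] length xs\<close> and absorb one \<open>\<Delta>\<close> into its complement.\<close>
  define y where "y = inv (inv (\<Delta> [^] length xs) \<otimes> x \<otimes> \<Delta> [^] length xs) \<otimes> \<Delta>"
  have "y \<in> simples"
    unfolding y_def by (intro simple_complements(1) simple_Delta_pow_conj x(1))
  moreover have "inv (\<Delta> [^] length (x # xs)) \<otimes> lprod G (x # xs)
      = inv y \<otimes> (inv (\<Delta> [^] length xs) \<otimes> lprod G xs)"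
    using x r by (simp add: y_def inv_mult_group m_assoc)
  ultimately show ?case using ys by (intro exI[of _ "y # ys"]) simp
qed

lemma generate_simples: "generate G simples = carrier G"
  using garside unfolding garside_def by blast

lemma word_len_witness:
  assumes "x \<in> carrier G"
  obtains ws where "set ws \<subseteq> simples \<union> (\<lambda>s. inv s) ` simples" "length ws = word_len x"
    "lprod G ws = x"
  using word_length_witness[OF simples_subset_carrier] assms generate_simples by blast

lemma word_len_mult_le: "x \<in> carrier G \<Longrightarrow> y \<in> carrier G \<Longrightarrow> word_len (x \<otimes> y) \<le> word_len x + word_len y"
  using word_length_mult_le[OF simples_subset_carrier] generate_simples by simp

lemma word_len_simple_word_le: "set xs \<subseteq> simples \<Longrightarrow> word_len (lprod G xs) \<le> length xs"
  by (rule word_length_le) blast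

lemma word_len_Delta_pow_le: "word_len (\<Delta> [^] (n::nat)) \<le> n" "word_len (inv (\<Delta> [^] (n::nat))) \<le> n"
proof -
  have "set (replicate n \<Delta>) \<subseteq> simples" using Delta_simple by (induction n) auto
  then show "word_len (\<Delta> [^] n) \<le> n"
    using word_len_simple_word_le[of "replicate n \<Delta>"] by (simp add: lprod_replicate)
  have "set (replicate n (inv \<Delta>)) \<subseteq> simples \<union> (\<lambda>s. inv s) ` simples"
    using Delta_simple by (induction n) auto
  then have "word_len (lprod G (replicate n (inv \<Delta>))) \<le> n"
    using word_length_le[of "replicate n (inv \<Delta>)" simples] by simp
  then show "word_len (inv (\<Delta> [^] n)) \<le> n"
    by (simp add: lprod_replicate nat_pow_inv)
qed

lemma word_len_inv_Delta_pow_mult_lprod_le: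
  assumes "set xs \<subseteq> simples"
  shows "word_len (inv (\<Delta> [^] length xs) \<otimes> lprod G xs) \<le> length xs"
proof -
  obtain ys where "set ys \<subseteq> simples" "length ys = length xs"
    "inv (\<Delta> [^] length xs) \<otimes> lprod G xs = lprod G (map (\<lambda>s. inv s) ys)"
    using inv_Delta_pow_mult_simple_word[OF assms] by blast
  then show ?thesis using word_length_le[of "map (\<lambda>s. inv s) ys"] by auto
qed

lemma simple_word_of_length_word_len:
  assumes "a \<in> M"
  obtains A where "set A \<subseteq> simples" "length A = word_len a" "lprod G A = a"
proof -
  have a: "a \<in> carrier G" using assms M_subset_carrier by blast
  obtain ws where ws: "set ws \<subseteq> simples \<union> (\<lambda>s. inv s) ` simples" "length ws = word_len a"
    "lprod G ws = a"
    using word_len_witness[OF a] by blast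
  obtain P N where PN: "P + N = word_len a" "a \<preceq> \<Delta> [^] P"
    using word_between_Delta_powers[OF ws(1)] ws by auto
  obtain xs where xs: "set xs \<subseteq> simples" "length xs = P" "lprod G xs = a"
    using simple_word_of_le_Delta_pow[OF assms PN(2)] by blast
  let ?A = "xs @ replicate (word_len a - P) \<one>"
  have "lprod G ?A = a"
    using xs a simples_subset_carrier by (subst lprod_append) (auto simp: lprod_replicate)
  moreover have "set ?A \<subseteq> simples" "length ?A = word_len a"
    using xs PN(1) one_simple by auto
  ultimately show thesis using that by blast
qed

section \<open>Word length of \<open>\<Delta> [^] p \<otimes> a\<close>\<close>

lemma unmovable_imp_Delta_ne_one: "unmovable G M \<Delta> a \<Longrightarrow> \<Delta> \<noteq> \<one>"
  using M_subset_carrier by (auto simp: unmovable_def leL_def)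

lemma word_len_le_if_le_Delta_int_pow:
  assumes "\<Delta> \<noteq> \<one>" "a \<in> M" "a \<preceq> \<Delta> [^] (k::int)"
  shows "int (word_len a) \<le> k"
proof -
  have a: "a \<in> carrier G" using assms(2) M_subset_carrier by blast
  have "\<Delta> [^] k = a \<otimes> (inv a \<otimes> \<Delta> [^] k)" using a by simp
  then have "\<Delta> [^] k \<in> M" using assms(2,3) M_mult_closed by (metis leL_def)
  then have k: "0 \<le> k" using Delta_int_pow_in_M_iff[OF assms(1)] by blast
  then obtain xs where "set xs \<subseteq> simples" "length xs = nat k" "lprod G xs = a"
    using simple_word_of_le_Delta_pow[OF assms(2), of "nat k"] assms(3) by (auto simp: pow_nat)
  then have "word_len a \<le> nat k" using word_len_simple_word_le by metis
  then show ?thesis using k by linarith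
qed

lemma unmovable_Delta_int_pow_le:
  assumes "unmovable G M \<Delta> a" "\<Delta> [^] (k::int) \<preceq> a"
  shows "k \<le> 0"
proof (rule ccontr)
  assume "\<not> k \<le> 0"
  then have "\<Delta> [^] (k - 1) \<in> M"
    using Delta_int_pow_in_M_iff unmovable_imp_Delta_ne_one[OF assms(1)] by simp
  moreover have "\<Delta> [^] k = \<Delta> \<otimes> \<Delta> [^] (k - 1)"
    using int_pow_mult[OF Delta_closed, of 1 "k - 1"] by simp
  ultimately have "\<Delta> \<preceq> \<Delta> [^] k" by (simp add: leL_def)
  then have "\<Delta> \<preceq> a"
    using assms M_subset_carrier by (intro left_le_trans[OF _ assms(2)]) (auto simp: unmovable_def)
  then show False using assms(1) by (simp add: unmovable_def)
qed

lemma word_len_inv_Delta_pow_mult_le: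
  assumes "a \<in> M"
  shows "word_len (inv (\<Delta> [^] (q::nat)) \<otimes> a) \<le> max q (word_len a)"
proof -
  obtain A where A: "set A \<subseteq> simples" "length A = word_len a" "lprod G A = a"
    using simple_word_of_length_word_len[OF assms] by blast
  have a: "a \<in> carrier G" using assms M_subset_carrier by blast
  show ?thesis
  proof (cases "q \<le> word_len a")
    case True
    have A_simples: "set (take q A) \<subseteq> simples" "set (drop q A) \<subseteq> simples"
      using A(1) by (meson order_trans set_take_subset set_drop_subset)+
    then have A_closed: "lprod G (take q A) \<in> carrier G" "lprod G (drop q A) \<in> carrier G"
      using simples_subset_carrier by (auto intro: lprod_closed)
    have len: "length (take q A) = q" using A(2) True by simp
    let ?u = "inv (\<Delta> [^] q) \<otimes> lprod G (take q A)"
    have "a = lprod G (take q A) \<otimes> lprod G (drop q A)"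
      using A A_simples simples_subset_carrier
      by (metis append_take_drop_id lprod_append subset_trans)
    then have split: "inv (\<Delta> [^] q) \<otimes> a = ?u \<otimes> lprod G (drop q A)"
      using A_closed by (simp add: m_assoc)
    have "word_len (inv (\<Delta> [^] q) \<otimes> a) \<le> word_len ?u + word_len (lprod G (drop q A))"
      unfolding split using A_closed by (intro word_len_mult_le) auto
    also have "\<dots> \<le> q + (word_len a - q)"
      using add_mono[OF word_len_inv_Delta_pow_mult_lprod_le word_len_simple_word_le, OF A_simples]
      by (simp only: len length_drop A(2))
    finally show ?thesis using True by simp
  next
    case False
    let ?r = "word_len a"
    have "\<Delta> [^] q = \<Delta> [^] ?r \<otimes> \<Delta> [^] (q - ?r)"
      using nat_pow_mult[OF Delta_closed, of ?r "q - ?r"] False by simp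
    then have "inv (\<Delta> [^] q) = inv (\<Delta> [^] (q - ?r)) \<otimes> inv (\<Delta> [^] ?r)"
      by (simp add: inv_mult_group)
    then have split: "inv (\<Delta> [^] q) \<otimes> a = inv (\<Delta> [^] (q - ?r)) \<otimes> (inv (\<Delta> [^] length A) \<otimes> lprod G A)"
      using A a by (simp add: m_assoc)
    have "word_len (inv (\<Delta> [^] q) \<otimes> a)
        \<le> word_len (inv (\<Delta> [^] (q - ?r))) + word_len (inv (\<Delta> [^] length A) \<otimes> lprod G A)"
      unfolding split using A(1) simples_subset_carrier lprod_closed
      by (intro word_len_mult_le) auto
    also have "\<dots> \<le> (q - ?r) + ?r"
      using add_mono[OF word_len_Delta_pow_le(2) word_len_inv_Delta_pow_mult_lprod_le[OF A(1)]] A(2)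
      by (simp only:)
    finally show ?thesis using False by simp
  qed
qed

lemma word_len_Delta_pow_mult_le:
  assumes "a \<in> M"
  shows "int (word_len (\<Delta> [^] p \<otimes> a)) \<le> max (int (word_len a) + p) 0 + max (- p) 0"
proof (cases p rule: int_cases)
  case (nonneg n)
  have "word_len (\<Delta> [^] n \<otimes> a) \<le> word_len (\<Delta> [^] n) + word_len a"
    using assms M_subset_carrier by (intro word_len_mult_le) auto
  then show ?thesis using word_len_Delta_pow_le(1)[of n] nonneg by (simp add: int_pow_int)
next
  case (neg n)
  then have "\<Delta> [^] p = inv (\<Delta> [^] Suc n)"
    by (simp only: int_pow_neg_int[OF Delta_closed])
  then have "word_len (\<Delta> [^] p \<otimes> a) \<le> max (Suc n) (word_len a)"
    using word_len_inv_Delta_pow_mult_le[OF assms, of "Suc n"] by (simp only:)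
  then show ?thesis using neg by (auto simp: max_def split: if_splits)
qed

lemma word_len_Delta_pow_mult_ge:
  assumes "unmovable G M \<Delta> a"
  shows "max (int (word_len a) + p) 0 + max (- p) 0 \<le> int (word_len (\<Delta> [^] p \<otimes> a))"
proof -
  have a: "a \<in> M" "a \<in> carrier G"
    using assms M_subset_carrier by (auto simp: unmovable_def)
  let ?\<alpha> = "\<Delta> [^] p \<otimes> a"
  have \<alpha>: "?\<alpha> \<in> carrier G" using a(2) by simp
  obtain ws where ws: "set ws \<subseteq> simples \<union> (\<lambda>s. inv s) ` simples" "length ws = word_len ?\<alpha>"
    "lprod G ws = ?\<alpha>"
    by (rule word_len_witness[OF \<alpha>])
  obtain P N where PN: "P + N = word_len ?\<alpha>" "?\<alpha> \<preceq> \<Delta> [^] P" "inv (\<Delta> [^] N) \<preceq> ?\<alpha>"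
    using word_between_Delta_powers[OF ws(1)] unfolding ws(2,3) by blast
  have "\<Delta> [^] P = \<Delta> [^] p \<otimes> \<Delta> [^] (int P - p)"
    using int_pow_mult[OF Delta_closed, of p "int P - p"] by (simp add: int_pow_int)
  then have "a \<preceq> \<Delta> [^] (int P - p)"
    using PN(2) a(2) leL_mult_left_iff[of "\<Delta> [^] p" a "\<Delta> [^] (int P - p)" M] by simp
  then have upper: "int (word_len a) \<le> int P - p"
    using word_len_le_if_le_Delta_int_pow unmovable_imp_Delta_ne_one[OF assms] a(1) by blast
  have "inv (\<Delta> [^] N) = \<Delta> [^] p \<otimes> \<Delta> [^] (- int N - p)"
    using int_pow_mult[OF Delta_closed, of p "- int N - p"] by (simp add: int_pow_neg_int)
  then have "\<Delta> [^] (- int N - p) \<preceq> a"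
    using PN(3) a(2) leL_mult_left_iff[of "\<Delta> [^] p" "\<Delta> [^] (- int N - p)" a M] by simp
  then have lower: "- int N - p \<le> 0"
    using unmovable_Delta_int_pow_le[OF assms] by blast
  show ?thesis using upper lower PN(1) by linarith
qed

lemma word_len_Delta_pow_mult:
  assumes "unmovable G M \<Delta> a"
  shows "int (word_len (\<Delta> [^] p \<otimes> a)) = max (int (word_len a) + p) 0 + max (- p) 0"
  using assms by (intro order_antisym word_len_Delta_pow_mult_le word_len_Delta_pow_mult_ge)
    (simp_all add: unmovable_def)

end

theorem corollary2p4:
  fixes G :: "('a, 'b) monoid_scheme" and M :: "'a set" and \<Delta> \<alpha> a :: 'a and p :: int
  assumes "garside G M \<Delta>"
    and "\<alpha> \<in> carrier G"
    and "unmovable G M \<Delta> a"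
    and "\<alpha> = (\<Delta> [^]\<^bsub>G\<^esub> p) \<otimes>\<^bsub>G\<^esub> a"
  defines "lg \<equiv> (\<lambda>x. int (word_length G (Div G M \<Delta> - {\<one>\<^bsub>G\<^esub>}) x))"
  shows "(p \<ge> 0 \<longrightarrow> lg \<alpha> = lg a + p)
    \<and> (p \<le> - lg a \<longrightarrow> lg \<alpha> = - p)
    \<and> (- lg a \<le> p \<and> p \<le> 0 \<longrightarrow> lg \<alpha> = lg a)
    \<and> lg \<alpha> = max (lg a + p) (max (- p) (lg a))"
proof -
  have "group G" using assms(1) by (simp add: garside_def)
  then interpret garside_structure G M \<Delta>
    using assms(1) by (simp add: garside_structure_def garside_structure_axioms_def)
  have "lg x = int (word_len x)" for x
    using word_length_remove_one[OF simples_subset_carrier] by (simp add: lg_def)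
  then have "lg \<alpha> = max (lg a + p) 0 + max (- p) 0" and "0 \<le> lg a"
    using word_len_Delta_pow_mult[OF assms(3)] by (simp_all add: assms(4))
  then show ?thesis by linarith
qed

end
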